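(* Let $G=(V,E)$ be an undirected graph with $n$ vertices and positive integer vertex weights, let $OPT$ be the minimum weight of a vertex cover and $W_{max}$ the maximum vertex weight. The expected number of iterations of Global SEMO (with the standard mutation operator and fitness $f(x)=(Cost(x),LP(x))$) until its population $P$ contains a $2$-approximation, i.e. a vertex cover of weight at most $2\cdot OPT$, is $O(OPT\cdot n(\log W_{max}+\log n))$.
   Context: Weighted vertex cover: $G=(V,E)$ with $V=\{v_1,\dots,v_n\}$ and weight function $w:V\to\mathbb{N}^+$ (positive integers). A vertex cover is a set $C\subseteq V$ such that every edge has an endpoint in $C$. Search points are $x\in\{0,1\}^n$, where $v_i$ is selected iff $x_i=1$. $Cost(x)=\sum_{i=1}^n w(v_i)x_i$. $G(x)=(V(x),E(x))$ is obtained by deleting the selected vertices and all edges having a selected endpoint: $V(x)=V\setminus\{v_i:x_i=1\}$, $E(x)=\{e\in E: e\cap\{v_i:x_i=1\}=\emptyset\}$. $LP(x)$ is the optimal value of the linear program: minimize $\sum_{v_i\in V(x)} w(v_i)y_i$ subject to $y_i+y_j\ge 1$ for all $\{v_i,v_j\}\in E(x)$ and $0\le y_i\le 1$ (so $LP(x)=0$ iff $x$ is a vertex cover). For vectors, $f(x)\le f(y)$ means componentwise $\le$ (both objectives minimized). Global SEMO: choose $x\in\{0,1\}^n$ uniformly at random and set $P=\{x\}$. In each iteration: choose $x\in P$ uniformly at random; create $x'$ by flipping each bit of $x$ independently with probability $1/n$ (standard mutation); if there is no $y\in P$ with $f(y)\le f(x')$, add $x'$ to $P$ and delete all other $z\in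 P$ with $f(x')\le f(z)$. Time is measured as the number of iterations. *)

theory Defs
  imports "HOL-Probability.Probability"
begin

text \<open>Vertices are 0,...,n-1; search points are bool lists of length n (x ! i iff v_i selected).
Edges are 2-element sets of vertices.\<close>

definition wf_graph :: "nat \<Rightarrow> nat set set \<Rightarrow> (nat \<Rightarrow> nat) \<Rightarrow> bool" where
  "wf_graph n E w \<longleftrightarrow> (\<forall>e\<in>E. \<exists>i j. e = {i, j} \<and> i \<noteq> j \<and> i < n \<and> j < n)
                      \<and> (\<forall>i<n. w i > 0)"

definition cost :: "nat \<Rightarrow> (nat \<Rightarrow> nat) \<Rightarrow> bool list \<Rightarrow> nat" where
  "cost n w x = (\<Sum>i<n. w i * (if x ! i then 1 else 0))"

definition is_vc :: "nat \<Rightarrow> nat set set \<Rightarrow> bool list \<Rightarrow> bool" where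
  "is_vc n E x \<longleftrightarrow> (\<forall>e\<in>E. \<exists>i\<in>e. i < n \<and> x ! i)"

text \<open>Optimal value of the LP relaxation of the residual graph G(x).\<close>
definition LP :: "nat \<Rightarrow> nat set set \<Rightarrow> (nat \<Rightarrow> nat) \<Rightarrow> bool list \<Rightarrow> real" where
  "LP n E w x = Inf {(\<Sum>i\<in>{i. i < n \<and> \<not> x ! i}. real (w i) * y i) | y.
       (\<forall>i<n. 0 \<le> y i \<and> y i \<le> 1) \<and>
       (\<forall>i j. {i, j} \<in> E \<and> i < n \<and> j < n \<and> \<not> x ! i \<and> \<not> x ! j \<longrightarrow> y i + y j \<ge> 1)}"

definition weakly_dom :: "nat \<Rightarrow> nat set set \<Rightarrow> (nat \<Rightarrow> nat) \<Rightarrow> bool list \<Rightarrow> bool list \<Rightarrow> bool" where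
  "weakly_dom n E w y x \<longleftrightarrow> cost n w y \<le> cost n w x \<and> LP n E w y \<le> LP n E w x"

fun mutate :: "real \<Rightarrow> bool list \<Rightarrow> bool list pmf" where
  "mutate p [] = return_pmf []"
| "mutate p (b # bs) =
     bind_pmf (bernoulli_pmf p) (\<lambda>c. map_pmf (\<lambda>r. (if c then \<not> b else b) # r) (mutate p bs))"

definition semo_step :: "nat \<Rightarrow> nat set set \<Rightarrow> (nat \<Rightarrow> nat) \<Rightarrow> bool list set \<Rightarrow> bool list set pmf" where
  "semo_step n E w P =
     bind_pmf (pmf_of_set P) (\<lambda>x. map_pmf (\<lambda>x'.
        if (\<exists>y\<in>P. weakly_dom n E w y x') then P
        else insert x' {z\<in>P. \<not> weakly_dom n E w x' z}) (mutate (1 / real n) x))"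

definition OPT :: "nat \<Rightarrow> nat set set \<Rightarrow> (nat \<Rightarrow> nat) \<Rightarrow> nat" where
  "OPT n E w = Min {cost n w x | x. length x = n \<and> is_vc n E x}"

definition Wmax :: "nat \<Rightarrow> (nat \<Rightarrow> nat) \<Rightarrow> nat" where
  "Wmax n w = Max (w ` {..<n})"

definition hit :: "nat \<Rightarrow> nat set set \<Rightarrow> (nat \<Rightarrow> nat) \<Rightarrow> bool list set \<Rightarrow> bool" where
  "hit n E w P \<longleftrightarrow> (\<exists>x\<in>P. is_vc n E x \<and> cost n w x \<le> 2 * OPT n E w)"

fun semo_run :: "nat \<Rightarrow> nat set set \<Rightarrow> (nat \<Rightarrow> nat) \<Rightarrow> nat \<Rightarrow> bool list set pmf" where
  "semo_run n E w 0 = map_pmf (\<lambda>x. {x}) (pmf_of_set {x. length x = n})"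
| "semo_run n E w (Suc t) =
     bind_pmf (semo_run n E w t) (\<lambda>P. if hit n E w P then return_pmf P else semo_step n E w P)"

text \<open>Expected hitting time E[T] = sum over t of Pr[T > t].\<close>
definition expected_time :: "nat \<Rightarrow> nat set set \<Rightarrow> (nat \<Rightarrow> nat) \<Rightarrow> ennreal" where
  "expected_time n E w = (\<Sum>t. ennreal (measure_pmf.prob (semo_run n E w t) {P. \<not> hit n E w P}))"

end

theory Submission
  imports Defs
begin

text \<open>
  Call a search point x promising if Cost(x) + 2 LP(x) \<le> 2 OPT, and give it the potential LP(x)
  if it is promising and LP(0) + OPT \<cdot> Cost(x) otherwise. The population potential, the least
  potential of a member (0 once a 2-approximation is present), never increases, because the
  potential is monotone under weak dominance.

  The LP relaxation has a half-integral optimum y. At a promising minimiser x, selecting any vertex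
  v with y v > 0 keeps x promising and lowers the potential by w v \<cdot> y v; these decreases sum to
  LP(x). At a non-promising minimiser, deselecting a selected vertex v lowers it by OPT \<cdot> w v, and
  these sum to at least half the potential. A fixed single flip has probability at least 1/(e n),
  and the population has at most 2 OPT + 1 members, since their LP values are distinct
  half-integers in [0, OPT]. Hence the expected potential shrinks by the factor
  1 - 1/(2 e n (2 OPT + 1)) in every step. It starts below OPT (1 + n Wmax) and is at least 1/2
  until the target is hit, which bounds the tail probabilities of the hitting time.
\<close>

section \<open>Standard bit mutation\<close>

lemma length_set_pmf_mutate: "l \<in> set_pmf (mutate p x) \<Longrightarrow> length l = length x"
  by (induction x arbitrary: l) auto

lemma finite_set_pmf_mutate: "finite (set_pmf (mutate p x))"
proof (rule finite_subset)
  show "set_pmf (mutate p x) \<subseteq> {l. length l = length x}"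
    using length_set_pmf_mutate by blast
  show "finite {l::bool list. length l = length x}"
    using finite_lists_length_eq[of "UNIV :: bool set"] by simp
qed

lemma pmf_map_Cons:
  "pmf (map_pmf ((#) a) M) y = (case y of [] \<Rightarrow> 0 | c # r \<Rightarrow> if c = a then pmf M r else 0)"
proof (cases y)
  case (Cons c r)
  then show ?thesis
    using pmf_map_inj'[of "(#) a" M r] by (auto simp: pmf_eq_0_set_pmf)
qed (auto simp: pmf_eq_0_set_pmf)

lemma pmf_mutate:
  assumes "0 \<le> p" "p \<le> 1"
  shows "pmf (mutate p x) x' =
    (if length x' = length x then \<Prod>i<length x. if x ! i = x' ! i then 1 - p else p else 0)"
proof (induction x arbitrary: x')
  case Nil
  then show ?case by (auto simp: pmf_return)
next
  case (Cons b bs)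
  show ?case
  proof (cases x')
    case (Cons c r)
    have "pmf (mutate p (b # bs)) x' = (if c = b then 1 - p else p) * pmf (mutate p bs) r"
      using Cons assms by (auto simp: pmf_bind pmf_map_Cons)
    then show ?thesis
      using Cons Cons.IH[of r] by (simp del: prod.lessThan_Suc add: prod.lessThan_Suc_shift)
  qed (use assms in \<open>simp add: pmf_bind pmf_map_Cons\<close>)
qed

lemma pmf_mutate_flip:
  assumes "0 \<le> p" "p \<le> 1" "i < length x"
  shows "pmf (mutate p x) (x[i := \<not> x ! i]) = p * (1 - p) ^ (length x - 1)"
proof -
  have "pmf (mutate p x) (x[i := \<not> x ! i]) = (\<Prod>j<length x. if j = i then p else 1 - p)"
    using assms by (simp add: pmf_mutate nth_list_update) (intro prod.cong, auto)
  also have "\<dots> = p * (\<Prod>j\<in>{..<length x} - {i}. 1 - p)"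
    using assms by (subst prod.remove[of _ i]) auto
  finally show ?thesis using assms by simp
qed

lemma exp_minus_one_le_power:
  assumes "n \<ge> (2::nat)"
  shows "exp (-1) \<le> (1 - 1 / real n) ^ (n - 1)"
proof -
  define m where "m = n - 1"
  have m: "m \<ge> 1" "real n = real m + 1" using assms by (auto simp: m_def)
  have "(1 + 1 / real m) ^ m \<le> exp (1 / real m) ^ m"
    by (intro power_mono) (auto simp: exp_ge_add_one_self[of "1 / real m", simplified add.commute])
  also have "\<dots> = exp 1" using m by (simp add: exp_of_nat_mult[symmetric])
  finally have "inverse (exp 1) \<le> inverse ((1 + 1 / real m) ^ m)"
    by (intro le_imp_inverse_le) (auto simp: add_pos_nonneg)
  moreover have "1 - 1 / real n = inverse (1 + 1 / real m)" using m by (simp add: field_simps)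
  ultimately show ?thesis by (simp add: m_def exp_minus power_inverse)
qed

lemma nn_integral_pmf_le_diff:
  fixes M :: "'a pmf" and g :: "'a \<Rightarrow> real"
  assumes fin: "finite (set_pmf M)" "finite I" and inj: "inj_on f I"
    and g: "\<And>a. a \<in> set_pmf M \<Longrightarrow> 0 \<le> g a \<and> g a \<le> c"
    and g_f: "\<And>i. i \<in> I \<Longrightarrow> f i \<in> set_pmf M \<Longrightarrow> g (f i) \<le> c - d i"
  defines "q \<equiv> \<Sum>i\<in>I. d i * pmf M (f i)"
  shows "q \<le> c" and "(\<integral>\<^sup>+a. g a \<partial>M) \<le> ennreal (c - q)"
proof -
  define S where "S = set_pmf M"
  have g_le: "g a \<le> c - (\<Sum>i\<in>I. if a = f i then d i else 0)" if "a \<in> S" for a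
  proof (cases "a \<in> f ` I")
    case True
    then obtain j where j: "j \<in> I" "a = f j" by blast
    have "(\<Sum>i\<in>I. if a = f i then d i else 0) = (\<Sum>i\<in>I. if i = j then d i else 0)"
      using inj j by (intro sum.cong) (auto dest: inj_onD)
    then show ?thesis using fin j g_f that by (simp add: S_def)
  next
    case False
    then have "(\<Sum>i\<in>I. if a = f i then d i else 0) = 0" by (intro sum.neutral) auto
    then show ?thesis using g that by (simp add: S_def)
  qed
  have delta: "(\<Sum>a\<in>S. if a = f i then d i * pmf M a else 0) = d i * pmf M (f i)" for i
    using fin by (simp add: S_def sum.delta' pmf_eq_0_set_pmf)
  have "(\<Sum>a\<in>S. g a * pmf M a) \<le> (\<Sum>a\<in>S. (c - (\<Sum>i\<in>I. if a = f i then d i else 0)) * pmf M a)"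
    using g_le by (intro sum_mono mult_right_mono) auto
  also have "\<dots> = c * (\<Sum>a\<in>S. pmf M a) - (\<Sum>i\<in>I. \<Sum>a\<in>S. if a = f i then d i * pmf M a else 0)"
    by (simp add: algebra_simps sum_distrib_left sum_distrib_right sum_subtractf
        sum.swap[of _ I S] if_distrib cong: if_cong)
  also have "\<dots> = c - q"
    using fin by (simp only: delta) (simp add: q_def S_def sum_pmf_eq_1)
  finally have le: "(\<Sum>a\<in>S. g a * pmf M a) \<le> c - q" .
  have "0 \<le> (\<Sum>a\<in>S. g a * pmf M a)" using g by (intro sum_nonneg) (auto simp: S_def)
  then show "q \<le> c" using le by simp
  have "(\<integral>\<^sup>+a. g a \<partial>M) = (\<Sum>a\<in>S. ennreal (g a) * ennreal (pmf M a))"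
    unfolding S_def using fin by (intro nn_integral_measure_pmf_finite) auto
  also have "\<dots> = ennreal (\<Sum>a\<in>S. g a * pmf M a)"
    using g by (subst sum_ennreal[symmetric]) (auto simp: S_def ennreal_mult' intro!: sum.cong)
  finally show "(\<integral>\<^sup>+a. g a \<partial>M) \<le> ennreal (c - q)" using le by (simp add: ennreal_leI)
qed

lemma geometric_le_one:
  fixes d K :: real
  assumes d: "0 < d" "d \<le> 1" and K: "0 < K" and N: "ln K / d \<le> real N"
  shows "K * (1 - d) ^ N \<le> 1"
proof -
  have "(1 - d) ^ N \<le> exp (- d) ^ N"
    using d exp_ge_add_one_self[of "-d"] by (intro power_mono) auto
  also have "\<dots> = exp (- (d * real N))" by (simp add: exp_of_nat_mult[symmetric] algebra_simps)
  also have "\<dots> \<le> exp (- ln K)" using N d by (simp add: field_simps)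
  also have "\<dots> = 1 / K" using K by (simp add: exp_minus inverse_eq_divide)
  finally show ?thesis using K by (simp add: field_simps)
qed

lemma suminf_le_of_geometric_bound:
  fixes p :: "nat \<Rightarrow> real"
  assumes p: "\<And>t. 0 \<le> p t" "\<And>t. p t \<le> 1" "\<And>t. p t \<le> K * (1 - d) ^ t"
    and d: "0 < d" "d \<le> 1" and K: "1 \<le> K"
  shows "(\<Sum>t. ennreal (p t)) \<le> ennreal (1 / d + ln K / d + 1)"
proof -
  define N where "N = nat \<lceil>ln K / d\<rceil>"
  define g where "g t = (if t < N then 1 else K * (1 - d) ^ t)" for t
  have g_shift: "(\<lambda>t. g (t + N)) = (\<lambda>t. (K * (1 - d) ^ N) * (1 - d) ^ t)"
    by (auto simp: g_def power_add fun_eq_iff)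
  have sum_g: "summable g"
    using summable_iff_shift[of g N] g_shift d by (auto intro!: summable_mult)
  have p_le_g: "p t \<le> g t" for t using p by (auto simp: g_def)
  have sum_p: "summable p"
    by (rule summable_comparison_test'[OF sum_g, of 0]) (use p p_le_g in auto)
  have tail: "K * (1 - d) ^ N \<le> 1"
    using d K by (intro geometric_le_one) (auto simp: N_def)
  have "(\<Sum>t. p t) \<le> (\<Sum>t. g t)" using p_le_g sum_p sum_g by (intro suminf_le) auto
  also have "\<dots> = (\<Sum>t. g (t + N)) + (\<Sum>t<N. g t)"
    using sum_g by (rule suminf_split_initial_segment)
  also have "(\<Sum>t. g (t + N)) = K * (1 - d) ^ N * (1 / d)"
    unfolding g_shift using d by (subst suminf_mult) (auto simp: suminf_geometric)
  also have "(\<Sum>t<N. g t) = real N" by (simp add: g_def)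
  finally have "(\<Sum>t. p t) \<le> K * (1 - d) ^ N * (1 / d) + real N" .
  moreover have "K * (1 - d) ^ N * (1 / d) \<le> 1 / d"
    using mult_right_mono[OF tail, of "1 / d"] d by simp
  moreover have "real N \<le> ln K / d + 1"
  proof -
    have "0 \<le> ln K / d" using K d by simp
    then show ?thesis unfolding N_def by linarith
  qed
  ultimately have "(\<Sum>t. p t) \<le> 1 / d + ln K / d + 1" by linarith
  then show ?thesis using p sum_p by (simp add: suminf_ennreal2 ennreal_leI)
qed

lemma nn_integral_pmf_of_set_le:
  fixes T :: "'a \<Rightarrow> ennreal"
  assumes P: "finite P" "x \<in> P"
    and T: "\<And>z. z \<in> P \<Longrightarrow> T z \<le> ennreal c" "T x \<le> ennreal (c - q)"
    and q: "0 \<le> q" "q \<le> c"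
  shows "(\<integral>\<^sup>+z. T z \<partial>pmf_of_set P) \<le> ennreal (c - q / real (card P))"
proof -
  have card: "1 \<le> real (card P)" using P card_gt_0_iff[of P] by fastforce
  have "(\<Sum>z\<in>P. T z) = T x + (\<Sum>z\<in>P - {x}. T z)"
    using P by (simp add: sum.remove)
  also have "\<dots> \<le> ennreal (c - q) + (\<Sum>z\<in>P - {x}. ennreal c)"
    using T by (intro add_mono sum_mono) auto
  also have "\<dots> = ennreal (c - q + real (card P - 1) * c)"
    using P q by (simp add: ennreal_mult' card_Diff_singleton ennreal_of_nat_eq_real_of_nat)
  also have "\<dots> = ennreal (real (card P) * c - q)"
    using card by (simp add: of_nat_diff algebra_simps)
  finally have "(\<Sum>z\<in>P. T z) / ennreal (real (card P))
      \<le> ennreal (real (card P) * c - q) / ennreal (real (card P))"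
    by (rule divide_right_mono_ennreal)
  also have "\<dots> = ennreal (c - q / real (card P))"
  proof -
    have "c \<le> real (card P) * c" using mult_right_mono[of 1 "real (card P)" c] card q by simp
    then show ?thesis using card q by (subst divide_ennreal) (auto simp: field_simps)
  qed
  moreover have "(\<integral>\<^sup>+z. T z \<partial>pmf_of_set P) = (\<Sum>z\<in>P. T z) / ennreal (real (card P))"
    using P by (subst nn_integral_pmf_of_set) (auto simp: ennreal_of_nat_eq_real_of_nat)
  ultimately show ?thesis by simp
qed

section \<open>The LP relaxation and optimal covers\<close>

locale vc_instance =
  fixes n :: nat and E :: "nat set set" and w :: "nat \<Rightarrow> nat"
  assumes wf: "wf_graph n E w" and edges_nonempty: "E \<noteq> {}"
begin

definition lp_feasible :: "bool list \<Rightarrow> (nat \<Rightarrow> real) \<Rightarrow> bool" where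
  "lp_feasible x y \<longleftrightarrow> (\<forall>i<n. 0 \<le> y i \<and> y i \<le> 1) \<and>
     (\<forall>i j. {i, j} \<in> E \<and> i < n \<and> j < n \<and> \<not> x ! i \<and> \<not> x ! j \<longrightarrow> 1 \<le> y i + y j)"

definition uncovered :: "bool list \<Rightarrow> nat set" where
  "uncovered x = {i. i < n \<and> \<not> x ! i}"

definition lp_value :: "bool list \<Rightarrow> (nat \<Rightarrow> real) \<Rightarrow> real" where
  "lp_value x y = (\<Sum>i\<in>uncovered x. real (w i) * y i)"

definition half_integral :: "(nat \<Rightarrow> real) \<Rightarrow> bool" where
  "half_integral y \<longleftrightarrow> (\<forall>i<n. y i \<in> {0, 1/2, 1})"

definition fractional :: "(nat \<Rightarrow> real) \<Rightarrow> nat set" where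
  "fractional y = {i. i < n \<and> y i \<notin> {0, 1/2, 1}}"

text \<open>Moving all fractional coordinates of a feasible point towards or away from 1/2 at the same
  rate preserves feasibility as long as none leaves [0, 1]; this yields half-integral optima.\<close>
definition scale_fractional :: "(nat \<Rightarrow> real) \<Rightarrow> real \<Rightarrow> nat \<Rightarrow> real" where
  "scale_fractional y l i = (if i \<in> fractional y then 1/2 + l * (y i - 1/2) else y i)"

lemma finite_uncovered [simp]: "finite (uncovered x)"
  by (simp add: uncovered_def)

lemma finite_fractional [simp]: "finite (fractional y)"
  by (simp add: fractional_def)

lemma w_pos: "i < n \<Longrightarrow> 0 < w i"
  using wf by (simp add: wf_graph_def)

lemma edge_cases: "e \<in> E \<Longrightarrow> \<exists>i j. e = {i, j} \<and> i \<noteq> j \<and> i < n \<and> j < n"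
  using wf by (auto simp: wf_graph_def)

lemma n_ge_2: "2 \<le> n"
proof -
  obtain e where "e \<in> E" using edges_nonempty by auto
  then obtain i j where "i \<noteq> j" "i < n" "j < n" using edge_cases by blast
  then show ?thesis by linarith
qed

lemma lp_value_nonneg: "lp_feasible x y \<Longrightarrow> 0 \<le> lp_value x y"
  unfolding lp_value_def lp_feasible_def uncovered_def by (intro sum_nonneg) auto

lemma fractional_distance:
  assumes "lp_feasible x y" "i \<in> fractional y"
  shows "0 < \<bar>y i - 1/2\<bar>" "\<bar>y i - 1/2\<bar> < 1/2"
  using assms by (auto simp: fractional_def lp_feasible_def abs_if)

lemma lp_feasible_scale_fractional:
  assumes y: "lp_feasible x y" and l: "0 \<le> l" "l * m \<le> 1/2"
    and m: "\<And>i. i \<in> fractional y \<Longrightarrow> \<bar>y i - 1/2\<bar> \<le> m"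
  shows "lp_feasible x (scale_fractional y l)"
proof -
  let ?z = "scale_fractional y l"
  have shift: "\<bar>l * (y i - 1/2)\<bar> \<le> 1/2" if "i \<in> fractional y" for i
    using mult_left_mono[OF m[OF that] l(1)] l by (simp add: abs_mult)
  have "0 \<le> ?z i \<and> ?z i \<le> 1" if "i < n" for i
    using y that shift[of i] by (auto simp: scale_fractional_def lp_feasible_def abs_le_iff)
  moreover have "1 \<le> ?z i + ?z j"
    if e: "{i, j} \<in> E" "i < n" "j < n" "\<not> x ! i" "\<not> x ! j" for i j
  proof -
    have sum: "0 \<le> (y i - 1/2) + (y j - 1/2)" using y e by (auto simp: lp_feasible_def)
    have mixed: "0 \<le> l * (y a - 1/2) + (y b - 1/2)"
      if a: "a \<in> fractional y" and b: "b < n" "b \<notin> fractional y"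
        and ab: "0 \<le> (y a - 1/2) + (y b - 1/2)" for a b
    proof -
      have "y b \<in> {0, 1/2, 1}" using b by (auto simp: fractional_def)
      moreover have "y b \<noteq> 0" using ab fractional_distance[OF y a] by auto
      ultimately consider "y b = 1/2" | "y b = 1" by blast
      then show ?thesis
      proof cases
        case 1
        then show ?thesis using ab l by simp
      next
        case 2
        then show ?thesis using shift[OF a] by (simp add: abs_le_iff)
      qed
    qed
    show ?thesis
      using sum mixed[of i j] mixed[of j i] e l
      by (cases "i \<in> fractional y"; cases "j \<in> fractional y")
        (auto simp: scale_fractional_def distrib_left[symmetric] add.commute)
  qed
  ultimately show ?thesis by (auto simp: lp_feasible_def)
qed

lemma lp_value_scale_fractional:
  "lp_value x (scale_fractional y l) =
     lp_value x (scale_fractional y 0) + l * (\<Sum>i\<in>uncovered x \<inter> fractional y. real (w i) * (y i - 1/2))"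
proof -
  have "real (w i) * scale_fractional y l i = real (w i) * scale_fractional y 0 i
      + l * (if i \<in> fractional y then real (w i) * (y i - 1/2) else 0)" for i
    by (simp add: scale_fractional_def algebra_simps)
  then show ?thesis
    by (simp add: lp_value_def sum.distrib sum_distrib_left sum.inter_restrict)
qed

lemma scale_fractional_1 [simp]: "scale_fractional y 1 = y"
  by (auto simp: scale_fractional_def fun_eq_iff)

lemma half_integral_scale_fractional_0: "half_integral (scale_fractional y 0)"
  by (auto simp: half_integral_def scale_fractional_def fractional_def)

lemma fractional_scale_fractional_subset:
  assumes y: "lp_feasible x y" and i0: "i0 \<in> fractional y"
    and m: "\<bar>y i0 - 1/2\<bar> = m"
  shows "fractional (scale_fractional y (1 / (2 * m))) \<subset> fractional y"
proof -
  define L where "L = 1 / (2 * m)"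
  have "0 < m" using fractional_distance[OF y i0] m by simp
  then have "L * (y i0 - 1/2) \<in> {-1/2, 1/2}"
    using m by (cases "1/2 \<le> y i0") (auto simp: L_def abs_if field_simps)
  moreover have "scale_fractional y L i0 = 1/2 + L * (y i0 - 1/2)"
    using i0 by (simp add: scale_fractional_def)
  ultimately have "scale_fractional y L i0 \<in> {0, 1}" by auto
  then have "i0 \<notin> fractional (scale_fractional y L)"
    by (auto simp: fractional_def)
  moreover have "fractional (scale_fractional y l) \<subseteq> fractional y" for l
    by (auto simp: fractional_def scale_fractional_def)
  ultimately show ?thesis using i0 unfolding L_def by blast
qed

lemma exists_half_integral_le:
  assumes "lp_feasible x y"
  shows "\<exists>y'. lp_feasible x y' \<and> half_integral y' \<and> lp_value x y' \<le> lp_value x y"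
  using assms
proof (induction "card (fractional y)" arbitrary: y rule: less_induct)
  case less
  note y = less.prems
  show ?case
  proof (cases "fractional y = {}")
    case True
    then have "half_integral y" by (auto simp: half_integral_def fractional_def)
    then show ?thesis using y by blast
  next
    case False
    define m where "m = Max ((\<lambda>i. \<bar>y i - 1/2\<bar>) ` fractional y)"
    have "m \<in> (\<lambda>i. \<bar>y i - 1/2\<bar>) ` fractional y"
      unfolding m_def using False by (intro Max_in) auto
    then obtain i0 where i0: "i0 \<in> fractional y" "\<bar>y i0 - 1/2\<bar> = m" by auto
    have m_pos: "0 < m" "m < 1/2" using fractional_distance[OF y i0(1)] i0(2) by auto
    have m_max: "\<bar>y i - 1/2\<bar> \<le> m" if "i \<in> fractional y" for i
      unfolding m_def using that by (intro Max_ge) auto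
    have feasible: "lp_feasible x (scale_fractional y l)" if "0 \<le> l" "l * m \<le> 1/2" for l
      using lp_feasible_scale_fractional[OF y that m_max] .
    define s where "s = (\<Sum>i\<in>uncovered x \<inter> fractional y. real (w i) * (y i - 1/2))"
    have affine: "lp_value x (scale_fractional y l) = lp_value x (scale_fractional y 0) + l * s" for l
      unfolding s_def by (rule lp_value_scale_fractional)
    \<comment> \<open>the value is affine in the scaling, so one of the extreme scalings does not increase it\<close>
    show ?thesis
    proof (cases "0 \<le> s")
      case True
      then show ?thesis
        using feasible[of 0] m_pos half_integral_scale_fractional_0 affine[of 1] by force
    next
      case False
      let ?L = "1 / (2 * m)"
      have "card (fractional (scale_fractional y ?L)) < card (fractional y)"
        using fractional_scale_fractional_subset[OF y i0] by (intro psubset_card_mono) auto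
      then obtain y' where y': "lp_feasible x y'" "half_integral y'"
          "lp_value x y' \<le> lp_value x (scale_fractional y ?L)"
        using less.hyps feasible[of ?L] m_pos by fastforce
      have "?L * s \<le> 1 * s" using False m_pos by (intro mult_right_mono_neg) auto
      then show ?thesis using y' affine[of ?L] affine[of 1] by auto
    qed
  qed
qed

abbreviation lp :: "bool list \<Rightarrow> real" where
  "lp \<equiv> LP n E w"

abbreviation lp_empty :: real where
  "lp_empty \<equiv> lp (replicate n False)"

abbreviation opt :: real where
  "opt \<equiv> real (OPT n E w)"

lemma LP_eq_Inf: "lp x = Inf {lp_value x y | y. lp_feasible x y}"
  unfolding LP_def lp_value_def lp_feasible_def uncovered_def by simp

lemma lp_feasible_one: "lp_feasible x (\<lambda>_. 1)"
  by (simp add: lp_feasible_def)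

lemma LP_le_lp_value: "lp_feasible x y \<Longrightarrow> lp x \<le> lp_value x y"
  unfolding LP_eq_Inf by (rule cInf_lower) (auto intro!: bdd_belowI[of _ 0] lp_value_nonneg)

lemma lp_value_half_integral:
  assumes "half_integral y"
  shows "\<exists>k::nat. lp_value x y = real k / 2 \<and> k \<le> 2 * (\<Sum>i<n. w i)"
proof -
  define c where "c i = (if y i = 0 then 0 else if y i = 1/2 then 1 else (2::nat))" for i
  have c: "y i = real (c i) / 2" "c i \<le> 2" if "i < n" for i
    using assms that by (auto simp: half_integral_def c_def)
  have "lp_value x y = real (\<Sum>i\<in>uncovered x. w i * c i) / 2"
    unfolding lp_value_def sum_divide_distrib of_nat_sum
    by (intro sum.cong) (auto simp: uncovered_def c)
  moreover have "(\<Sum>i\<in>uncovered x. w i * c i) \<le> (\<Sum>i<n. w i * 2)"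
    by (rule order.trans[OF sum_mono sum_mono2]) (auto simp: uncovered_def c)
  then have "(\<Sum>i\<in>uncovered x. w i * c i) \<le> 2 * (\<Sum>i<n. w i)"
    by (simp add: sum_distrib_right[symmetric])
  ultimately show ?thesis by blast
qed

lemma LP_attained: "\<exists>y. lp_feasible x y \<and> half_integral y \<and> lp x = lp_value x y"
proof -
  define V where "V = {lp_value x y | y. lp_feasible x y \<and> half_integral y}"
  have "V \<subseteq> (\<lambda>k. real k / 2) ` {..2 * (\<Sum>i<n. w i)}"
    unfolding V_def using lp_value_half_integral by fastforce
  then have fin: "finite V" by (rule finite_subset) auto
  have "V \<noteq> {}"
    using lp_feasible_one by (auto simp: V_def half_integral_def)
  then have min: "Min V \<in> V" using fin by simp
  have "lp x = Min V"
    unfolding LP_eq_Inf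
  proof (rule cInf_eq_minimum)
    show "Min V \<in> {lp_value x y | y. lp_feasible x y}" using min by (auto simp: V_def)
  next
    fix v assume "v \<in> {lp_value x y | y. lp_feasible x y}"
    then obtain y where y: "lp_feasible x y" "v = lp_value x y" by auto
    then obtain y' where y': "lp_feasible x y'" "half_integral y'" "lp_value x y' \<le> v"
      using exists_half_integral_le by blast
    then have "Min V \<le> lp_value x y'" using fin by (intro Min_le) (auto simp: V_def)
    then show "Min V \<le> v" using y'(3) by linarith
  qed
  then show ?thesis using min by (auto simp: V_def)
qed

lemma LP_half_integer: "\<exists>k::nat. lp x = real k / 2"
  using LP_attained[of x] lp_value_half_integral by metis

lemma LP_nonneg: "0 \<le> lp x"
  using LP_attained[of x] lp_value_nonneg by metis

lemma LP_antimono: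
  assumes "\<forall>i<n. x ! i \<longrightarrow> x' ! i"
  shows "lp x' \<le> lp x"
proof -
  obtain y where y: "lp_feasible x y" "lp x = lp_value x y" using LP_attained by blast
  have "lp_feasible x' y" using y(1) assms unfolding lp_feasible_def by blast
  moreover have "lp_value x' y \<le> lp_value x y"
    unfolding lp_value_def using y(1) assms
    by (intro sum_mono2) (auto simp: uncovered_def lp_feasible_def)
  ultimately show ?thesis using LP_le_lp_value y(2) by fastforce
qed

lemma LP_le_LP_empty: "lp x \<le> lp_empty"
  by (rule LP_antimono) simp

lemma LP_select_le:
  assumes "length x = n" "v < n" "\<not> x ! v" "lp_feasible x y"
  shows "lp (x[v := True]) \<le> lp_value x y - real (w v) * y v"
proof -
  have "lp_feasible (x[v := True]) y"
    using assms unfolding lp_feasible_def by (auto simp: nth_list_update)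
  moreover have "uncovered (x[v := True]) = uncovered x - {v}"
    using assms by (auto simp: uncovered_def nth_list_update)
  then have "lp_value (x[v := True]) y = lp_value x y - real (w v) * y v"
    unfolding lp_value_def using assms by (simp add: sum_diff1 uncovered_def)
  ultimately show ?thesis using LP_le_lp_value by fastforce
qed

lemma is_vc_if_LP_eq_0:
  assumes "lp x = 0"
  shows "is_vc n E x"
  unfolding is_vc_def
proof
  fix e assume "e \<in> E"
  then obtain i j where e: "e = {i, j}" "i < n" "j < n" using edge_cases by blast
  show "\<exists>i\<in>e. i < n \<and> x ! i"
  proof (rule ccontr)
    assume "\<not> ?thesis"
    then have uncov: "i \<in> uncovered x" "j \<in> uncovered x" using e by (auto simp: uncovered_def)
    obtain y where y: "lp_feasible x y" "lp x = lp_value x y" using LP_attained by blast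
    have "\<forall>k\<in>uncovered x. 0 \<le> real (w k) * y k"
      using y(1) by (auto simp: lp_feasible_def uncovered_def)
    then have "\<forall>k\<in>uncovered x. real (w k) * y k = 0"
      using y assms by (simp add: lp_value_def sum_nonneg_eq_0_iff)
    then have "y i = 0" "y j = 0" using uncov e w_pos[of i] w_pos[of j] by auto
    moreover have "1 \<le> y i + y j"
      using y(1) uncov e \<open>e \<in> E\<close> by (auto simp: lp_feasible_def uncovered_def)
    ultimately show False by simp
  qed
qed

lemma cost_eq_sum_selected: "cost n w x = (\<Sum>i | i < n \<and> x ! i. w i)"
  unfolding cost_def by (rule sum.mono_neutral_cong_right) auto

lemma cost_le_sum_weights: "cost n w x \<le> (\<Sum>i<n. w i)"
  unfolding cost_def by (intro sum_mono) auto

lemma cost_update: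
  assumes "length x = n" "v < n"
  shows "cost n w (x[v := b]) + (if x ! v then w v else 0) = cost n w x + (if b then w v else 0)"
proof -
  have "cost n w x = (if x ! v then w v else 0) + (\<Sum>i\<in>{..<n} - {v}. w i * (if x ! i then 1 else 0))"
    for x using assms(2) unfolding cost_def by (simp add: sum.remove[of "{..<n}" v])
  from this[of x] this[of "x[v := b]"] show ?thesis
    using assms by (simp add: nth_list_update)
qed

lemma weight_le_Wmax: "i < n \<Longrightarrow> w i \<le> Wmax n w"
  unfolding Wmax_def by (intro Max_ge) auto

lemma sum_weights_le: "(\<Sum>i<n. w i) \<le> n * Wmax n w"
  using sum_mono[of "{..<n}" w "\<lambda>_. Wmax n w"] weight_le_Wmax by simp

lemma Wmax_pos: "1 \<le> Wmax n w"
  using weight_le_Wmax[of 0] w_pos[of 0] n_ge_2 by linarith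

lemma finite_cover_costs: "finite {cost n w x | x. length x = n \<and> is_vc n E x}"
proof -
  have "finite {x :: bool list. length x = n}"
    using finite_lists_length_eq[of "UNIV :: bool set" n] by simp
  then have "finite (cost n w ` {x. length x = n \<and> is_vc n E x})" by simp
  then show ?thesis by (simp add: setcompr_eq_image)
qed

lemma is_vc_all: "is_vc n E (replicate n True)"
  unfolding is_vc_def using edge_cases by fastforce

lemma cost_all_mem_cover_costs:
  "cost n w (replicate n True) \<in> {cost n w x | x. length x = n \<and> is_vc n E x}"
  using is_vc_all by auto

lemma OPT_attained: "\<exists>x. length x = n \<and> is_vc n E x \<and> cost n w x = OPT n E w"
proof -
  have "OPT n E w \<in> {cost n w x | x. length x = n \<and> is_vc n E x}"
    unfolding OPT_def using finite_cover_costs cost_all_mem_cover_costs by (intro Min_in) auto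
  then show ?thesis by auto
qed

lemma OPT_le: "OPT n E w \<le> n * Wmax n w"
proof -
  have "OPT n E w \<le> cost n w (replicate n True)"
    unfolding OPT_def using finite_cover_costs cost_all_mem_cover_costs by (rule Min_le)
  then show ?thesis using cost_le_sum_weights sum_weights_le le_trans by blast
qed

lemma cost_pos_if_is_vc: "is_vc n E x \<Longrightarrow> 1 \<le> cost n w x"
proof -
  assume vc: "is_vc n E x"
  obtain e where "e \<in> E" using edges_nonempty by auto
  then obtain i where i: "i < n" "x ! i" using vc unfolding is_vc_def by blast
  then have "w i \<le> cost n w x" unfolding cost_eq_sum_selected by (intro member_le_sum) auto
  then show ?thesis using w_pos[OF i(1)] by simp
qed

lemma OPT_pos: "1 \<le> OPT n E w"
  using OPT_attained cost_pos_if_is_vc by metis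

lemma LP_empty_le_OPT: "lp_empty \<le> opt"
proof -
  obtain x where x: "length x = n" "is_vc n E x" "cost n w x = OPT n E w"
    using OPT_attained by blast
  define y where "y i = (if x ! i then 1 else 0 :: real)" for i
  have "lp_feasible (replicate n False) y"
    using x(2) unfolding lp_feasible_def is_vc_def by (fastforce simp: y_def)
  moreover have "lp_value (replicate n False) y = real (cost n w x)"
    unfolding lp_value_def cost_def uncovered_def of_nat_sum
    by (intro sum.cong) (auto simp: y_def)
  ultimately show ?thesis using LP_le_lp_value x(3) by fastforce
qed

section \<open>The potential of a population\<close>

definition promising :: "bool list \<Rightarrow> bool" where
  "promising x \<longleftrightarrow> real (cost n w x) + 2 * lp x \<le> 2 * opt"

text \<open>Since a promising point has LP value at most that of the empty selection, the offset makes
  the potential monotone under weak dominance.\<close>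
definition potential :: "bool list \<Rightarrow> real" where
  "potential x = (if promising x then lp x else lp_empty + opt * real (cost n w x))"

definition valid_population :: "bool list set \<Rightarrow> bool" where
  "valid_population P \<longleftrightarrow> finite P \<and> P \<noteq> {} \<and> (\<forall>x\<in>P. length x = n) \<and>
     (\<forall>a\<in>P. \<forall>b\<in>P. a \<noteq> b \<longrightarrow> \<not> weakly_dom n E w a b)"

definition population_potential :: "bool list set \<Rightarrow> real" where
  "population_potential P = (if hit n E w P then 0 else Min (potential ` P))"

definition semo_update :: "bool list set \<Rightarrow> bool list \<Rightarrow> bool list set" where
  "semo_update P x' =
     (if \<exists>y\<in>P. weakly_dom n E w y x' then P else insert x' {z\<in>P. \<not> weakly_dom n E w x' z})"

lemma semo_step_eq:
  "semo_step n E w P = bind_pmf (pmf_of_set P) (\<lambda>x. map_pmf (semo_update P) (mutate (1 / real n) x))"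
  unfolding semo_step_def semo_update_def[abs_def] by simp

lemma potential_le: "potential x \<le> lp_empty + opt * real (cost n w x)"
  using LP_le_LP_empty[of x] by (simp add: potential_def add_increasing2)

lemma potential_nonneg: "0 \<le> potential x"
  using LP_nonneg[of x] LP_nonneg[of "replicate n False"] by (simp add: potential_def)

lemma potential_mono:
  assumes "weakly_dom n E w a b"
  shows "potential a \<le> potential b"
proof -
  have le: "cost n w a \<le> cost n w b" "lp a \<le> lp b" using assms by (auto simp: weakly_dom_def)
  show ?thesis
  proof (cases "promising b")
    case True
    then have "promising a" using le unfolding promising_def by linarith
    then show ?thesis using True le by (simp add: potential_def)
  next
    case False
    have "opt * real (cost n w a) \<le> opt * real (cost n w b)"
      using le by (simp add: mult_left_mono)
    then show ?thesis using False potential_le[of a] by (simp add: potential_def)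
  qed
qed

lemma cost_pos_if_not_promising: "\<not> promising x \<Longrightarrow> 1 \<le> cost n w x"
  using LP_empty_le_OPT LP_le_LP_empty[of x] by (cases "cost n w x") (auto simp: promising_def)

lemma valid_population_singleton: "length x = n \<Longrightarrow> valid_population {x}"
  by (simp add: valid_population_def)

lemma valid_population_update:
  assumes "valid_population P" "length x' = n"
  shows "valid_population (semo_update P x')"
proof (cases "\<exists>y\<in>P. weakly_dom n E w y x'")
  case False
  then have "x' \<notin> P" by (auto simp: weakly_dom_def)
  then show ?thesis using assms False unfolding semo_update_def valid_population_def by auto
qed (use assms in \<open>simp add: semo_update_def\<close>)

lemma population_potential_attained:
  assumes "valid_population P" "\<not> hit n E w P"
  shows "\<exists>x\<in>P. population_potential P = potential x"
proof -
  have "Min (potential ` P) \<in> potential ` P"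
    using assms by (intro Min_in) (auto simp: valid_population_def)
  then show ?thesis using assms by (auto simp: population_potential_def)
qed

lemma population_potential_nonneg:
  assumes "valid_population P"
  shows "0 \<le> population_potential P"
proof (cases "hit n E w P")
  case False
  then show ?thesis using population_potential_attained[OF assms] potential_nonneg by metis
qed (simp add: population_potential_def)

lemma population_potential_le:
  "valid_population P \<Longrightarrow> z \<in> P \<Longrightarrow> population_potential P \<le> potential z"
  using potential_nonneg[of z] by (auto simp: population_potential_def valid_population_def)

lemma population_potential_update:
  assumes P: "valid_population P" "\<not> hit n E w P" and x': "length x' = n"
  shows "population_potential (semo_update P x') \<le> population_potential P"
    and "population_potential (semo_update P x') \<le> potential x'"
proof -
  have Q: "valid_population (semo_update P x')" using valid_population_update P x' by blast
  \<comment> \<open>every point of P and x' itself is weakly dominated by a survivor\<close>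
  have survivor: "\<exists>u\<in>semo_update P x'. potential u \<le> potential z" if z: "z \<in> insert x' P" for z
  proof (cases "\<exists>y\<in>P. weakly_dom n E w y x'")
    case True
    then show ?thesis using z potential_mono by (auto simp: semo_update_def)
  next
    case False
    then have x'_in: "x' \<in> semo_update P x'" by (simp add: semo_update_def)
    show ?thesis
    proof (cases "z \<in> semo_update P x'")
      case False
      then have "weakly_dom n E w x' z" using z \<open>\<not> (\<exists>y\<in>P. _)\<close> by (auto simp: semo_update_def)
      then show ?thesis using x'_in potential_mono by blast
    qed blast
  qed
  obtain z where "z \<in> P" "population_potential P = potential z"
    using population_potential_attained P by blast
  then show "population_potential (semo_update P x') \<le> population_potential P"
    using survivor[of z] population_potential_le[OF Q] by force
  show "population_potential (semo_update P x') \<le> potential x'"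
    using survivor[of x'] population_potential_le[OF Q] by force
qed

lemma population_potential_ge_half:
  assumes "valid_population P" "\<not> hit n E w P"
  shows "1/2 \<le> population_potential P"
proof -
  obtain x where x: "x \<in> P" "population_potential P = potential x"
    using population_potential_attained assms by blast
  show ?thesis
  proof (cases "promising x")
    case True
    obtain k :: nat where k: "lp x = real k / 2" using LP_half_integer by blast
    have "k \<noteq> 0"
    proof
      assume "k = 0"
      then have "is_vc n E x" "cost n w x \<le> 2 * OPT n E w"
        using k is_vc_if_LP_eq_0 True by (auto simp: promising_def)
      then show False using assms x(1) by (auto simp: hit_def)
    qed
    then show ?thesis using x True k by (simp add: potential_def)
  next
    case False
    have "1 * 1 \<le> opt * real (cost n w x)"
      using cost_pos_if_not_promising[OF False] OPT_pos by (intro mult_mono) auto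
    then show ?thesis using x False LP_nonneg[of "replicate n False"] by (simp add: potential_def)
  qed
qed

lemma card_valid_population_le:
  assumes "valid_population P"
  shows "card P \<le> 2 * OPT n E w + 1"
proof -
  \<comment> \<open>points of P are pairwise incomparable, so they have distinct half-integral LP values in [0, OPT]\<close>
  have inj: "inj_on lp P"
  proof
    fix a b assume "a \<in> P" "b \<in> P" "lp a = lp b"
    moreover have "weakly_dom n E w a b \<or> weakly_dom n E w b a"
      using \<open>lp a = lp b\<close> by (auto simp: weakly_dom_def)
    ultimately show "a = b" using assms by (auto simp: valid_population_def)
  qed
  have range: "lp x \<in> (\<lambda>k. real k / 2) ` {..2 * OPT n E w}" for x
  proof -
    obtain k :: nat where k: "lp x = real k / 2" using LP_half_integer by blast
    then have "real k / 2 \<le> opt" using LP_empty_le_OPT LP_le_LP_empty[of x] by simp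
    then have "k \<le> 2 * OPT n E w" by linarith
    then show ?thesis using k by auto
  qed
  have "card (lp ` P) \<le> card ((\<lambda>k. real k / 2) ` {..2 * OPT n E w})"
    using range by (intro card_mono) auto
  also have "\<dots> \<le> card {..2 * OPT n E w}" by (rule card_image_le) simp
  finally show ?thesis by (simp add: card_image[OF inj])
qed

definition improving_flips ::
    "bool list set \<Rightarrow> bool list \<Rightarrow> nat set \<Rightarrow> (nat \<Rightarrow> real) \<Rightarrow> bool" where
  "improving_flips P x I d \<longleftrightarrow> I \<subseteq> {..<n} \<and> population_potential P / 2 \<le> sum d I \<and>
     (\<forall>i\<in>I. 0 \<le> d i \<and>
        population_potential (semo_update P (x[i := \<not> x ! i])) \<le> population_potential P - d i)"

lemma improving_flips_promising:
  assumes P: "valid_population P" "\<not> hit n E w P"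
    and x: "x \<in> P" "population_potential P = potential x" "promising x"
  shows "\<exists>I d. improving_flips P x I d"
proof -
  have len: "length x = n" using P x by (auto simp: valid_population_def)
  obtain y where y: "lp_feasible x y" "half_integral y" "lp x = lp_value x y"
    using LP_attained by blast
  define I where "I = {v. v < n \<and> \<not> x ! v \<and> 0 < y v}"
  define d where "d v = real (w v) * y v" for v
  \<comment> \<open>selecting v keeps x promising, since by half-integrality w v \<le> 2 * d v\<close>
  have "0 \<le> d v \<and> population_potential (semo_update P (x[v := \<not> x ! v])) \<le> population_potential P - d v"
    if v: "v \<in> I" for v
  proof -
    have v': "v < n" "\<not> x ! v" "1/2 \<le> y v" "y v \<le> 1"
      using v y(1,2) by (auto simp: I_def half_integral_def lp_feasible_def)
    have cost: "cost n w (x[v := True]) = cost n w x + w v"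
      using cost_update[OF len v'(1), of True] v' by simp
    have lp: "lp (x[v := True]) \<le> lp x - d v"
      using LP_select_le[OF len v'(1,2) y(1)] y(3) by (simp add: d_def)
    have "real (w v) \<le> 2 * d v"
      using mult_left_mono[of 1 "2 * y v" "real (w v)"] v' by (simp add: d_def)
    then have "promising (x[v := True])"
      using x(3) cost lp by (simp add: promising_def)
    then have "potential (x[v := True]) \<le> population_potential P - d v"
      using lp x(2,3) by (simp add: potential_def)
    moreover have "0 \<le> d v" using v' by (simp add: d_def)
    ultimately show ?thesis
      using population_potential_update(2)[OF P, of "x[v := True]"] len v' by simp
  qed
  moreover have "sum d I = lp_value x y"
    unfolding lp_value_def d_def
    by (rule sum.mono_neutral_left) (use y(1) in \<open>force simp: I_def uncovered_def lp_feasible_def\<close>)+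
  moreover have "0 \<le> population_potential P" using population_potential_nonneg P(1) .
  ultimately have "improving_flips P x I d"
    using x y(3) by (auto simp: improving_flips_def I_def potential_def)
  then show ?thesis by blast
qed

lemma improving_flips_not_promising:
  assumes P: "valid_population P" "\<not> hit n E w P"
    and x: "x \<in> P" "population_potential P = potential x" "\<not> promising x"
  shows "\<exists>I d. improving_flips P x I d"
proof -
  have len: "length x = n" using P x by (auto simp: valid_population_def)
  define I where "I = {v. v < n \<and> x ! v}"
  define d where "d v = opt * real (w v)" for v
  have "0 \<le> d v \<and> population_potential (semo_update P (x[v := \<not> x ! v])) \<le> population_potential P - d v"
    if v: "v \<in> I" for v
  proof -
    have v': "v < n" "x ! v" using v by (auto simp: I_def)
    have "real (cost n w x) = real (cost n w (x[v := False])) + real (w v)"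
      using cost_update[OF len v'(1), of False] v' by (simp flip: of_nat_add)
    then have "potential (x[v := False]) \<le> population_potential P - d v"
      using potential_le[of "x[v := False]"] x(2,3) by (simp add: potential_def d_def algebra_simps)
    then show ?thesis
      using population_potential_update(2)[OF P, of "x[v := False]"] len v' by (simp add: d_def)
  qed
  moreover have "sum d I = opt * real (cost n w x)"
    unfolding d_def I_def cost_eq_sum_selected by (simp add: sum_distrib_left)
  moreover have "population_potential P \<le> 2 * (opt * real (cost n w x))"
  proof -
    have "opt * 1 \<le> opt * real (cost n w x)"
      using cost_pos_if_not_promising[OF x(3)] by (intro mult_left_mono) auto
    then show ?thesis using x(2,3) LP_empty_le_OPT by (simp add: potential_def)
  qed
  ultimately have "improving_flips P x I d" by (auto simp: improving_flips_def I_def)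
  then show ?thesis by blast
qed

lemma exists_improving_flips:
  assumes "valid_population P" "\<not> hit n E w P"
  shows "\<exists>x\<in>P. \<exists>I d. improving_flips P x I d"
  using population_potential_attained[OF assms] improving_flips_promising[OF assms]
    improving_flips_not_promising[OF assms] by blast

section \<open>Multiplicative drift\<close>

definition drift_rate :: real where
  "drift_rate = 1 / (2 * exp 1 * real n * (2 * opt + 1))"

lemma drift_rate_pos: "0 < drift_rate"
  using n_ge_2 by (simp add: drift_rate_def)

lemma drift_rate_le_1: "drift_rate \<le> 1"
proof -
  have "1 * 1 * 1 * 1 \<le> 2 * exp 1 * real n * (2 * opt + 1)"
    using n_ge_2 by (intro mult_mono) auto
  then show ?thesis unfolding drift_rate_def using n_ge_2 by (subst divide_le_eq_1_pos) auto
qed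

lemma pmf_mutate_flip_ge:
  assumes "length x = n" "i < n"
  shows "exp (-1) / real n \<le> pmf (mutate (1 / real n) x) (x[i := \<not> x ! i])"
proof -
  have "exp (-1) / real n \<le> (1 / real n) * (1 - 1 / real n) ^ (n - 1)"
    using exp_minus_one_le_power[OF n_ge_2] by (simp add: divide_right_mono)
  then show ?thesis using assms n_ge_2 by (simp add: pmf_mutate_flip)
qed

lemma expected_potential_mutate:
  assumes P: "valid_population P" "\<not> hit n E w P" and z: "z \<in> P"
  shows "(\<integral>\<^sup>+a. population_potential (semo_update P a) \<partial>mutate (1 / real n) z)
    \<le> ennreal (population_potential P)"
proof -
  have "length a = n" if "a \<in> set_pmf (mutate (1 / real n) z)" for a
    using that length_set_pmf_mutate P(1) z by (auto simp: valid_population_def)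
  then show ?thesis
    using nn_integral_pmf_le_diff(2)[OF finite_set_pmf_mutate, of "{}"]
      population_potential_nonneg valid_population_update[OF P(1)] population_potential_update(1)[OF P]
    by simp
qed

lemma expected_potential_mutate_improving:
  assumes P: "valid_population P" "\<not> hit n E w P" and x: "x \<in> P"
    and flips: "improving_flips P x I d"
  defines "q \<equiv> \<Sum>i\<in>I. d i * pmf (mutate (1 / real n) x) (x[i := \<not> x ! i])"
  shows "q \<le> population_potential P"
    and "(\<integral>\<^sup>+a. population_potential (semo_update P a) \<partial>mutate (1 / real n) x)
      \<le> ennreal (population_potential P - q)"
proof -
  have len: "length x = n" using P(1) x by (auto simp: valid_population_def)
  have I: "finite I" "I \<subseteq> {..<n}" using flips finite_subset by (auto simp: improving_flips_def)
  have "inj_on (\<lambda>i. x[i := \<not> x ! i]) I"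
    using I(2) len by (intro inj_onI) (metis lessThan_iff nth_list_update_eq nth_list_update_neq subsetD)
  moreover have "0 \<le> population_potential (semo_update P a) \<and>
      population_potential (semo_update P a) \<le> population_potential P"
    if "a \<in> set_pmf (mutate (1 / real n) x)" for a
    using that length_set_pmf_mutate len population_potential_nonneg
      valid_population_update[OF P(1)] population_potential_update(1)[OF P] by metis
  moreover have "population_potential (semo_update P (x[i := \<not> x ! i])) \<le> population_potential P - d i"
    if "i \<in> I" for i
    using flips that by (auto simp: improving_flips_def)
  ultimately show "q \<le> population_potential P"
    and "(\<integral>\<^sup>+a. population_potential (semo_update P a) \<partial>mutate (1 / real n) x)
      \<le> ennreal (population_potential P - q)"
    unfolding q_def by (rule nn_integral_pmf_le_diff[OF finite_set_pmf_mutate I(1)]; blast)+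
qed

lemma improving_flips_gain:
  assumes flips: "improving_flips P x I d" and len: "length x = n"
  shows "population_potential P / 2 * (exp (-1) / real n)
    \<le> (\<Sum>i\<in>I. d i * pmf (mutate (1 / real n) x) (x[i := \<not> x ! i]))"
proof -
  have "population_potential P / 2 * (exp (-1) / real n) \<le> sum d I * (exp (-1) / real n)"
    using flips by (intro mult_right_mono) (auto simp: improving_flips_def)
  also have "\<dots> = (\<Sum>i\<in>I. d i * (exp (-1) / real n))"
    by (rule sum_distrib_right)
  also have "\<dots> \<le> (\<Sum>i\<in>I. d i * pmf (mutate (1 / real n) x) (x[i := \<not> x ! i]))"
    using flips pmf_mutate_flip_ge[OF len]
    by (intro sum_mono mult_left_mono) (auto simp: improving_flips_def)
  finally show ?thesis .
qed

lemma expected_potential_semo_step: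
  assumes P: "valid_population P" "\<not> hit n E w P"
  shows "(\<integral>\<^sup>+Q. population_potential Q \<partial>semo_step n E w P)
    \<le> ennreal ((1 - drift_rate) * population_potential P)"
proof -
  let ?\<Phi> = "population_potential P"
  obtain x I d where x: "x \<in> P" and flips: "improving_flips P x I d"
    using exists_improving_flips[OF P] by blast
  define q where "q = (\<Sum>i\<in>I. d i * pmf (mutate (1 / real n) x) (x[i := \<not> x ! i]))"
  note improving = expected_potential_mutate_improving[OF P x flips, folded q_def]
  have q: "?\<Phi> / 2 * (exp (-1) / real n) \<le> q"
    unfolding q_def using P(1) x by (intro improving_flips_gain[OF flips]) (auto simp: valid_population_def)
  \<comment> \<open>x is picked with probability at least 1 / (2 OPT + 1)\<close>
  have card: "1 \<le> real (card P)" "real (card P) \<le> 2 * opt + 1"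
    using card_valid_population_le[OF P(1)] P(1) card_gt_0_iff[of P]
    by (auto simp: valid_population_def Suc_le_eq)
  have "drift_rate * ?\<Phi> = ?\<Phi> / 2 * (exp (-1) / real n) / (2 * opt + 1)"
    unfolding drift_rate_def using OPT_pos by (simp add: exp_minus field_simps)
  also have "\<dots> \<le> q / (2 * opt + 1)" using q by (intro divide_right_mono) auto
  also have "\<dots> \<le> q / real (card P)"
    using card q population_potential_nonneg[OF P(1)]
    by (intro divide_left_mono) (auto intro: order.trans[rotated])
  finally have "?\<Phi> - q / real (card P) \<le> (1 - drift_rate) * ?\<Phi>" by (simp add: algebra_simps)
  moreover have "(\<integral>\<^sup>+Q. population_potential Q \<partial>semo_step n E w P)
      \<le> ennreal (?\<Phi> - q / real (card P))"
    unfolding semo_step_eq nn_integral_bind_pmf nn_integral_map_pmf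
  proof (rule nn_integral_pmf_of_set_le)
    have "0 \<le> ?\<Phi> / 2 * (exp (-1) / real n)"
      using population_potential_nonneg[OF P(1)] by simp
    then show "0 \<le> q" using q by linarith
  qed (use P x improving expected_potential_mutate in \<open>auto simp: valid_population_def\<close>)
  ultimately show ?thesis by (meson ennreal_leI order.trans)
qed

lemma expected_potential_stopped_step:
  assumes "valid_population P"
  shows "(\<integral>\<^sup>+Q. population_potential Q \<partial>(if hit n E w P then return_pmf P else semo_step n E w P))
    \<le> ennreal ((1 - drift_rate) * population_potential P)"
proof (cases "hit n E w P")
  case False
  then show ?thesis using expected_potential_semo_step[OF assms] by simp
qed (simp add: population_potential_def)

lemma set_pmf_uniform_lists: "set_pmf (pmf_of_set {x :: bool list. length x = n}) = {x. length x = n}"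
proof (rule set_pmf_of_set)
  have "replicate n False \<in> {x. length x = n}" by simp
  then show "{x :: bool list. length x = n} \<noteq> {}" by blast
  show "finite {x :: bool list. length x = n}"
    using finite_lists_length_eq[of "UNIV :: bool set" n] by simp
qed

lemma valid_population_semo_run: "P \<in> set_pmf (semo_run n E w t) \<Longrightarrow> valid_population P"
proof (induction t arbitrary: P)
  case 0
  then show ?case
    by (auto simp: set_pmf_uniform_lists intro!: valid_population_singleton)
next
  case (Suc t)
  then obtain Q where Q: "Q \<in> set_pmf (semo_run n E w t)"
    and P: "P \<in> set_pmf (if hit n E w Q then return_pmf Q else semo_step n E w Q)" by auto
  have valid: "valid_population Q" using Suc.IH Q by blast
  show ?case
  proof (cases "hit n E w Q")
    case False
    then obtain x x' where x: "x \<in> Q" "x' \<in> set_pmf (mutate (1 / real n) x)" "P = semo_update Q x'"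
      using P valid by (auto simp: semo_step_eq valid_population_def)
    then have "length x' = n"
      using valid length_set_pmf_mutate by (auto simp: valid_population_def)
    then show ?thesis using valid_population_update[OF valid] x(3) by simp
  qed (use P valid in simp)
qed

definition initial_potential_bound :: real where
  "initial_potential_bound = opt + opt * real n * real (Wmax n w)"

lemma potential_le_initial_bound: "potential x \<le> initial_potential_bound"
proof -
  have "real (cost n w x) \<le> real n * real (Wmax n w)"
    using cost_le_sum_weights[of x] sum_weights_le by (simp flip: of_nat_mult)
  then have "opt * real (cost n w x) \<le> opt * (real n * real (Wmax n w))"
    by (intro mult_left_mono) auto
  then show ?thesis
    using potential_le[of x] LP_empty_le_OPT by (simp add: initial_potential_bound_def algebra_simps)
qed

lemma expected_potential_semo_run:
  "(\<integral>\<^sup>+P. population_potential P \<partial>semo_run n E w t)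
    \<le> ennreal ((1 - drift_rate) ^ t * initial_potential_bound)"
proof (induction t)
  case 0
  have "population_potential {x} \<le> initial_potential_bound" if "length x = n" for x
    using population_potential_le[OF valid_population_singleton[OF that]] potential_le_initial_bound
    by (meson insertI1 order.trans)
  then have "(\<integral>\<^sup>+x. population_potential {x} \<partial>pmf_of_set {x. length x = n})
      \<le> (\<integral>\<^sup>+x. initial_potential_bound \<partial>pmf_of_set {x :: bool list. length x = n})"
    by (intro nn_integral_mono_AE) (auto simp: AE_measure_pmf_iff set_pmf_uniform_lists intro: ennreal_leI)
  then show ?case by (simp add: measure_pmf.emeasure_space_1)
next
  case (Suc t)
  have "(\<integral>\<^sup>+P. population_potential P \<partial>semo_run n E w (Suc t))
      \<le> (\<integral>\<^sup>+P. ennreal (1 - drift_rate) * population_potential P \<partial>semo_run n E w t)"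
    using expected_potential_stopped_step valid_population_semo_run drift_rate_le_1
    by (auto simp: AE_measure_pmf_iff ennreal_mult' simp del: nn_integral_return_pmf
        intro!: nn_integral_mono_AE)
  also have "\<dots> \<le> ennreal (1 - drift_rate) * ennreal ((1 - drift_rate) ^ t * initial_potential_bound)"
    using Suc by (simp add: nn_integral_cmult mult_left_mono)
  also have "\<dots> = ennreal ((1 - drift_rate) ^ Suc t * initial_potential_bound)"
    using drift_rate_le_1 by (simp add: ennreal_mult'[symmetric] algebra_simps)
  finally show ?case .
qed

lemma prob_not_hit_le:
  "measure_pmf.prob (semo_run n E w t) {P. \<not> hit n E w P}
    \<le> 2 * initial_potential_bound * (1 - drift_rate) ^ t"
proof -
  \<comment> \<open>Markov's inequality, since the potential is at least 1/2 until a 2-approximation is found\<close>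
  have "ennreal (measure_pmf.prob (semo_run n E w t) {P. \<not> hit n E w P})
      = (\<integral>\<^sup>+P. indicator {P. \<not> hit n E w P} P \<partial>semo_run n E w t)"
    by (simp add: measure_pmf.emeasure_eq_measure[symmetric])
  also have "\<dots> \<le> (\<integral>\<^sup>+P. ennreal 2 * population_potential P \<partial>semo_run n E w t)"
  proof (intro nn_integral_mono_AE, unfold AE_measure_pmf_iff, intro ballI)
    fix P assume run: "P \<in> set_pmf (semo_run n E w t)"
    have "1 \<le> 2 * population_potential P" if "\<not> hit n E w P"
      using population_potential_ge_half[OF valid_population_semo_run[OF run] that] by simp
    then have "\<not> hit n E w P \<Longrightarrow> ennreal 1 \<le> ennreal (2 * population_potential P)"
      by (intro ennreal_leI)
    then show "indicator {P. \<not> hit n E w P} P \<le> ennreal 2 * population_potential P"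
      by (auto simp: indicator_def ennreal_mult')
  qed
  also have "\<dots> \<le> ennreal 2 * ennreal ((1 - drift_rate) ^ t * initial_potential_bound)"
    using expected_potential_semo_run by (simp add: nn_integral_cmult mult_left_mono)
  also have "\<dots> = ennreal (2 * initial_potential_bound * (1 - drift_rate) ^ t)"
    using drift_rate_le_1 by (simp add: ennreal_mult' initial_potential_bound_def algebra_simps)
  finally show ?thesis
    using drift_rate_le_1 by (subst (asm) ennreal_le_iff) (auto simp: initial_potential_bound_def)
qed

definition log_scale :: real where
  "log_scale = ln (real (Wmax n w)) + ln (real n)"

lemma log_scale_ge_half: "1/2 \<le> log_scale"
proof -
  have "exp (1/2 :: real) \<le> 1 + 2 * (1/2)" by (rule real_exp_bound_lemma) auto
  then have "1/2 \<le> ln (2 :: real)" by (subst ln_ge_iff) auto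
  also have "\<dots> \<le> ln (real n)" using n_ge_2 by simp
  moreover have "0 \<le> ln (real (Wmax n w))" using Wmax_pos by simp
  ultimately show ?thesis unfolding log_scale_def by linarith
qed

lemma inverse_drift_rate_le: "1 / drift_rate \<le> 18 * real n * opt"
proof -
  have "1 / drift_rate = 2 * exp 1 * real n * (2 * opt + 1)" by (simp add: drift_rate_def)
  also have "\<dots> \<le> 2 * 3 * real n * (3 * opt)"
    using exp_le OPT_pos by (intro mult_mono) auto
  finally show ?thesis by simp
qed

lemma ln_initial_potential_bound_le: "ln (2 * initial_potential_bound) \<le> 4 * log_scale"
proof -
  define N where "N = real n * real (Wmax n w)"
  have N: "2 \<le> N" using n_ge_2 Wmax_pos mult_mono[of 2 "real n" 1 "real (Wmax n w)"] by (simp add: N_def)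
  have opt: "1 \<le> opt" "opt \<le> N" using OPT_pos OPT_le by (simp_all add: N_def flip: of_nat_mult)
  have "initial_potential_bound = opt + opt * N"
    by (simp add: initial_potential_bound_def N_def algebra_simps)
  moreover have "opt \<le> opt * N" using opt N by simp
  moreover have "opt * N \<le> N * N" using opt(2) N by (intro mult_right_mono) auto
  ultimately have bound: "2 * initial_potential_bound \<le> 4 * (N * N)" by (simp add: algebra_simps)
  also have "\<dots> \<le> N ^ 2 * N ^ 2"
    using mult_right_mono[of 4 "N ^ 2" "N * N"] power_mono[OF N, of 2] by (simp add: power2_eq_square)
  finally have "2 * initial_potential_bound \<le> N ^ 4" by (simp flip: power_add)
  moreover have "0 < 2 * initial_potential_bound"
    using opt by (simp add: initial_potential_bound_def add_pos_nonneg)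
  ultimately have "ln (2 * initial_potential_bound) \<le> ln (N ^ 4)" by (rule ln_mono)
  then show ?thesis using n_ge_2 Wmax_pos by (simp add: N_def log_scale_def ln_mult ln_realpow)
qed

lemma expected_time_le: "expected_time n E w \<le> ennreal (110 * opt * real n * log_scale)"
proof -
  let ?K = "2 * initial_potential_bound"
  have "1 \<le> opt + opt * real n * real (Wmax n w)" using OPT_pos by (intro add_increasing2) auto
  then have K: "1 \<le> ?K" by (simp add: initial_potential_bound_def)
  have "expected_time n E w \<le> ennreal (1 / drift_rate + ln ?K / drift_rate + 1)"
    unfolding expected_time_def
    using prob_not_hit_le drift_rate_pos drift_rate_le_1 K
    by (intro suminf_le_of_geometric_bound) auto
  also have "1 / drift_rate + ln ?K / drift_rate + 1 = (1 + ln ?K) * (1 / drift_rate) + 1"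
    by (simp add: add_divide_distrib)
  also have "\<dots> \<le> (6 * log_scale) * (18 * real n * opt) + 2 * log_scale * (real n * opt)"
  proof (intro add_mono mult_mono)
    show "1 + ln ?K \<le> 6 * log_scale"
      using ln_initial_potential_bound_le log_scale_ge_half by linarith
    show "1 \<le> 2 * log_scale * (real n * opt)"
      using mult_mono[of 1 "2 * log_scale" 1 "real n * opt"] log_scale_ge_half n_ge_2 OPT_pos
        mult_mono[of 1 "real n" 1 opt]
      by simp
  qed (use inverse_drift_rate_le log_scale_ge_half K drift_rate_pos in auto)
  also have "\<dots> = 110 * opt * real n * log_scale" by (simp add: algebra_simps)
  finally show ?thesis by (simp add: ennreal_leI)
qed

end

theorem theorem2:
  "\<exists>c::real. c > 0 \<and>
     (\<forall>(n::nat) (E::nat set set) (w::nat \<Rightarrow> nat).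
        wf_graph n E w \<and> E \<noteq> {} \<longrightarrow>
        expected_time n E w
          \<le> ennreal (c * real (OPT n E w) * real n * (ln (real (Wmax n w)) + ln (real n))))"
proof (intro exI[of _ 110] conjI allI impI)
  fix n E w assume "wf_graph n E w \<and> E \<noteq> {}"
  then interpret vc_instance n E w by unfold_locales auto
  show "expected_time n E w
      \<le> ennreal (110 * real (OPT n E w) * real n * (ln (real (Wmax n w)) + ln (real n)))"
    using expected_time_le by (simp add: log_scale_def)
qed simp

end
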